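(* Let $X$ be a real Banach space and $(x_n)$ a bounded sequence in $X$. Suppose that $c>0$ is such that \[ \Big\|\sum_{j=1}^n \alpha_j x_j\Big\|\ge c\sum_{j=1}^n |\alpha_j| \] for all $n\in\mathbb{N}$ and all real numbers $\alpha_1,\dots,\alpha_n$. Then (i) $\delta_X(x_n)\ge 2c$, and (ii) $\operatorname{d}(\operatorname{clust}_{X^{**}}(x_n),X)\ge c$.
   Context: $X$ is identified with its canonical image in $X^{**}$. For a bounded sequence $(x_n)$ in $X$, $\operatorname{clust}_{X^{**}}(x_n)$ is the set of all weak$^*$ cluster points of $(x_n)$ in $X^{**}$ and $\delta_X(x_n)$ is the norm-diameter of this set (equivalently $\sup_{x^*\in B_{X^*}}(\limsup_n x^*(x_n)-\liminf_n x^*(x_n))$). For nonempty sets $A,B$, $\operatorname{d}(A,B)=\inf\{\|a-b\|: a\in A,b\in B\}$. *)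

theory Defs
  imports "HOL-Analysis.Analysis"
begin

definition canon_bidual :: "'a::real_normed_vector \<Rightarrow> (('a \<Rightarrow>\<^sub>L real) \<Rightarrow>\<^sub>L real)" where
  "canon_bidual x = Blinfun (\<lambda>f. blinfun_apply f x)"

text \<open>Weak-star topology on X**: initial topology of the evaluations F |-> F f, f in X*,
  i.e. pullback of the product (pointwise) topology on X* => real.\<close>
definition weak_star_topology :: "(('a::real_normed_vector \<Rightarrow>\<^sub>L real) \<Rightarrow>\<^sub>L real) topology" where
  "weak_star_topology = pullback_topology UNIV blinfun_apply (product_topology (\<lambda>_. euclideanreal) UNIV)"

definition clust_bidual :: "(nat \<Rightarrow> 'a::real_normed_vector) \<Rightarrow> (('a \<Rightarrow>\<^sub>L real) \<Rightarrow>\<^sub>L real) set" where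
  "clust_bidual x = {F. \<forall>U. openin weak_star_topology U \<and> F \<in> U \<longrightarrow>
       (\<exists>\<^sub>F n in sequentially. canon_bidual (x n) \<in> U)}"

definition delta_X :: "(nat \<Rightarrow> 'a::real_normed_vector) \<Rightarrow> real" where
  "delta_X x = diameter (clust_bidual x)"

end

theory Submission
  imports Defs
begin

text \<open>
  Both parts come from norm-one functionals produced by the Hahn--Banach theorem. For (i), the
  lower \<open>\<ell>\<^sub>1\<close>-estimate applied to the alternating sequence \<open>(-1)^k x\<^sub>k\<close> yields a functional
  \<open>F\<close> of norm at most one with \<open>F x\<^sub>k \<ge> c\<close> for even \<open>k\<close> and \<open>F x\<^sub>k \<le> -c\<close> for odd \<open>k\<close>; cluster
  points of the even and of the odd subsequence then differ by at least \<open>2c\<close> at \<open>F\<close>. For (ii),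
  given \<open>y \<in> X\<close> and \<open>\<epsilon> > 0\<close>, the convex hull of some tail of \<open>(x\<^sub>n)\<close> stays \<open>c\<close>-far from \<open>y\<close> up to
  \<open>\<epsilon>\<close>: otherwise two disjoint blocks would both be close to \<open>y\<close>, while their difference has norm
  at least \<open>c\<close> times the total weight. Hahn--Banach then gives \<open>F\<close> of norm at most one with
  \<open>F y \<le> \<epsilon>\<close> and \<open>F x\<^sub>n \<ge> c\<close> on that tail, so every weak-star cluster point \<open>G\<close> satisfies
  \<open>\<parallel>G - y\<parallel> \<ge> G F - F y \<ge> c - \<epsilon>\<close>.
\<close>

section \<open>Sublinear functionals and the Hahn--Banach theorem\<close>

definition sublinear :: "('a::real_vector \<Rightarrow> real) \<Rightarrow> bool" where
  "sublinear p \<longleftrightarrow> (\<forall>x y. p (x + y) \<le> p x + p y) \<and> (\<forall>t x. 0 \<le> t \<longrightarrow> p (t *\<^sub>R x) = t * p x)"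

lemma sublinear_add: "sublinear p \<Longrightarrow> p (x + y) \<le> p x + p y"
  by (simp add: sublinear_def)

lemma sublinear_scaleR: "sublinear p \<Longrightarrow> 0 \<le> t \<Longrightarrow> p (t *\<^sub>R x) = t * p x"
  by (simp add: sublinear_def)

lemma sublinear_zero: "sublinear p \<Longrightarrow> p 0 = 0"
  using sublinear_scaleR[of p 0 0] by simp

lemma sublinear_neg_le: "sublinear p \<Longrightarrow> - p (- x) \<le> p x"
  using sublinear_add[of p x "- x"] sublinear_zero[of p] by simp

lemma sublinearI:
  assumes add: "\<And>x y. p (x + y) \<le> p x + p y"
    and scale: "\<And>t x. 0 < t \<Longrightarrow> p (t *\<^sub>R x) \<le> t * p x"
  shows "sublinear p"
proof -
  have pos: "p (t *\<^sub>R x) = t * p x" if "0 < t" for t x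
  proof (rule antisym)
    have "p x = p (inverse t *\<^sub>R t *\<^sub>R x)" using that by simp
    also have "\<dots> \<le> inverse t * p (t *\<^sub>R x)" using scale[of "inverse t" "t *\<^sub>R x"] that by simp
    finally show "t * p x \<le> p (t *\<^sub>R x)" using that by (simp add: field_simps)
  qed (rule scale[OF that])
  have "p 0 = 0" using pos[of 2 0] by simp
  then show ?thesis using add pos by (auto simp: sublinear_def le_less)
qed

lemma sublinear_Inf_chain:
  fixes p :: "'a::real_vector \<Rightarrow> real"
  assumes ne: "C \<noteq> {}" and dom: "\<And>q. q \<in> C \<Longrightarrow> sublinear q \<and> q \<le> p"
    and chain: "\<And>q1 q2. q1 \<in> C \<Longrightarrow> q2 \<in> C \<Longrightarrow> q1 \<le> q2 \<or> q2 \<le> q1"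
  shows "sublinear (\<lambda>x. INF q\<in>C. q x)" and "\<And>q. q \<in> C \<Longrightarrow> (\<lambda>x. INF q\<in>C. q x) \<le> q"
proof -
  define u where "u = (\<lambda>x. INF q\<in>C. q x)"
  have bdd: "bdd_below ((\<lambda>q. q x) ` C)" for x
  proof (rule bdd_belowI2)
    fix q assume "q \<in> C"
    then have "- p (- x) \<le> - q (- x)" "- q (- x) \<le> q x"
      using dom sublinear_neg_le by (auto simp: le_fun_def)
    then show "- p (- x) \<le> q x" by linarith
  qed
  have lower: "u x \<le> q x" if "q \<in> C" for q x
    unfolding u_def using bdd that by (rule cINF_lower)
  have greatest: "a \<le> u x" if "\<And>q. q \<in> C \<Longrightarrow> a \<le> q x" for a x
    unfolding u_def using ne that by (rule cINF_greatest)
  have "u (x + y) \<le> u x + u y" for x y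
  proof -
    have "u (x + y) \<le> q1 x + q2 y" if q1: "q1 \<in> C" and q2: "q2 \<in> C" for q1 q2
    proof -
      obtain q where q: "q \<in> C" "q \<le> q1" "q \<le> q2"
        using chain[OF q1 q2] q1 q2 by blast
      have "u (x + y) \<le> q x + q y"
        using lower[OF q(1)] sublinear_add[of q x y] dom[OF q(1)] order_trans by blast
      also have "\<dots> \<le> q1 x + q2 y" using q by (simp add: le_fun_def add_mono)
      finally show ?thesis .
    qed
    then have "u (x + y) - q2 y \<le> u x" if "q2 \<in> C" for q2
      using that by (intro greatest) force
    then have "u (x + y) - u x \<le> u y" by (intro greatest) force
    then show ?thesis by simp
  qed
  moreover have "u (t *\<^sub>R x) \<le> t * u x" if "0 < t" for t x
  proof -
    have "u (t *\<^sub>R x) / t \<le> u x"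
    proof (rule greatest)
      fix q assume "q \<in> C"
      then have "u (t *\<^sub>R x) \<le> t * q x"
        using lower[of q "t *\<^sub>R x"] dom sublinear_scaleR[of q t x] that by simp
      then show "u (t *\<^sub>R x) / t \<le> q x" using that by (simp add: field_simps)
    qed
    then show ?thesis using that by (simp add: field_simps)
  qed
  ultimately show "sublinear (\<lambda>x. INF q\<in>C. q x)" unfolding u_def[symmetric] by (rule sublinearI)
  show "(\<lambda>x. INF q\<in>C. q x) \<le> q" if "q \<in> C" for q
    using lower[OF that] by (simp add: u_def le_fun_def)
qed

text \<open>The functional \<open>r\<close> below is sublinear and below \<open>q\<close>, so minimality forces \<open>r = q\<close>;
  evaluating at \<open>t = 1\<close> gives the missing inequality \<open>q x + q a \<le> q (x + a)\<close>.\<close>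

lemma minimal_sublinear_additive:
  fixes q :: "'a::real_vector \<Rightarrow> real"
  assumes q: "sublinear q" and minimal: "\<And>r. sublinear r \<Longrightarrow> r \<le> q \<Longrightarrow> r = q"
  shows "q (x + a) = q x + q a"
proof -
  define r where "r = (\<lambda>z. INF t\<in>{0..}. q (z + t *\<^sub>R a) - t * q a)"
  have bdd: "bdd_below ((\<lambda>t. q (z + t *\<^sub>R a) - t * q a) ` {0..})" for z
  proof (rule bdd_belowI2)
    fix t :: real assume "t \<in> {0..}"
    then have "t * q a = q (t *\<^sub>R a)" using sublinear_scaleR[OF q] by simp
    also have "\<dots> \<le> q (z + t *\<^sub>R a) + q (- z)"
      using sublinear_add[OF q, of "z + t *\<^sub>R a" "- z"] by simp
    finally show "- q (- z) \<le> q (z + t *\<^sub>R a) - t * q a" by simp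
  qed
  have lower: "r z \<le> q (z + t *\<^sub>R a) - t * q a" if "0 \<le> t" for z t
    unfolding r_def using bdd that by (intro cINF_lower) auto
  have greatest: "b \<le> r z" if "\<And>t. 0 \<le> t \<Longrightarrow> b \<le> q (z + t *\<^sub>R a) - t * q a" for b z
    unfolding r_def using that by (intro cINF_greatest) auto
  have "r (z + y) \<le> r z + r y" for z y
  proof -
    have "r (z + y) \<le> (q (z + t *\<^sub>R a) - t * q a) + (q (y + s *\<^sub>R a) - s * q a)"
      if "0 \<le> t" "0 \<le> s" for t s
    proof -
      have "r (z + y) \<le> q ((z + y) + (t + s) *\<^sub>R a) - (t + s) * q a" using lower that by simp
      also have "q ((z + y) + (t + s) *\<^sub>R a) \<le> q (z + t *\<^sub>R a) + q (y + s *\<^sub>R a)"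
        using sublinear_add[OF q, of "z + t *\<^sub>R a" "y + s *\<^sub>R a"] by (simp add: algebra_simps)
      finally show ?thesis by (simp add: algebra_simps)
    qed
    then have "r (z + y) - (q (y + s *\<^sub>R a) - s * q a) \<le> r z" if "0 \<le> s" for s
      using that by (intro greatest) force
    then have "r (z + y) - r z \<le> r y" by (intro greatest) force
    then show ?thesis by simp
  qed
  moreover have "r (t *\<^sub>R z) \<le> t * r z" if "0 < t" for t z
  proof -
    have "r (t *\<^sub>R z) / t \<le> r z"
    proof (rule greatest)
      fix s :: real assume "0 \<le> s"
      then have "r (t *\<^sub>R z) \<le> q (t *\<^sub>R z + (t * s) *\<^sub>R a) - (t * s) * q a"
        using lower that by simp
      also have "q (t *\<^sub>R z + (t * s) *\<^sub>R a) = t * q (z + s *\<^sub>R a)"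
        using sublinear_scaleR[OF q, of t "z + s *\<^sub>R a"] that by (simp add: algebra_simps)
      finally show "r (t *\<^sub>R z) / t \<le> q (z + s *\<^sub>R a) - s * q a"
        using that by (simp add: field_simps)
    qed
    then show ?thesis using that by (simp add: field_simps)
  qed
  ultimately have "sublinear r" by (rule sublinearI)
  moreover have "r \<le> q" using lower[of 0] by (simp add: le_fun_def)
  ultimately have "r = q" by (rule minimal)
  then have "q x + q a \<le> q (x + a)" using lower[of 1 x] by simp
  with sublinear_add[OF q, of x a] show ?thesis by linarith
qed

theorem sublinear_dominates_linear:
  fixes p :: "'a::real_vector \<Rightarrow> real"
  assumes p: "sublinear p"
  shows "\<exists>f. linear f \<and> (\<forall>x. f x \<le> p x)"
proof -
  define A where "A = {q. sublinear q \<and> q \<le> p}"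
  have "\<exists>m\<in>A. \<forall>a\<in>A. a \<le> m \<longrightarrow> a = m"
  proof (rule predicate_Zorn[where P = "\<lambda>a u. u \<le> a"])
    show "partial_order_on A (relation_of (\<lambda>a u. u \<le> a) A)"
      by (rule partial_order_on_relation_ofI) auto
  next
    fix C assume C: "C \<in> Chains (relation_of (\<lambda>a u. u \<le> a) A)"
    then have CA: "C \<subseteq> A" by (rule Chains_relation_of)
    have chain: "q1 \<le> q2 \<or> q2 \<le> q1" if "q1 \<in> C" "q2 \<in> C" for q1 q2
      using C that unfolding Chains_def relation_of_def by blast
    show "\<exists>u\<in>A. \<forall>a\<in>C. u \<le> a"
    proof (cases "C = {}")
      case True
      then show ?thesis using p by (auto simp: A_def)
    next
      case False
      have dom: "sublinear q \<and> q \<le> p" if "q \<in> C" for q using CA that by (auto simp: A_def)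
      then obtain q0 where "q0 \<in> C" "q0 \<le> p" using False by blast
      with sublinear_Inf_chain[OF False dom chain] show ?thesis
        unfolding A_def by (intro bexI[of _ "\<lambda>x. INF q\<in>C. q x"]) (auto intro: order_trans)
    qed
  qed
  then obtain q where q: "sublinear q" "q \<le> p" and minimal: "\<And>r. sublinear r \<Longrightarrow> r \<le> q \<Longrightarrow> r = q"
    unfolding A_def by (auto intro: order_trans)
  have add: "q (x + y) = q x + q y" for x y
    by (rule minimal_sublinear_additive[OF q(1) minimal])
  have neg: "q (- x) = - q x" for x
    using add[of x "- x"] sublinear_zero[OF q(1)] by simp
  have "q (r *\<^sub>R x) = r * q x" for r x
  proof (cases "0 \<le> r")
    case True
    then show ?thesis using sublinear_scaleR[OF q(1)] by simp
  next
    case False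
    then have "q (r *\<^sub>R x) = - q ((- r) *\<^sub>R x)" using neg[of "(- r) *\<^sub>R x"] by simp
    then show ?thesis using sublinear_scaleR[OF q(1), of "- r" x] False by simp
  qed
  then have "linear q" by (intro linearI) (simp_all add: add)
  then show ?thesis using q(2) by (auto simp: le_fun_def)
qed

lemma linear_le_norm_obtains_blinfun:
  fixes f :: "'a::real_normed_vector \<Rightarrow> real"
  assumes f: "linear f" and le: "\<And>z. f z \<le> norm z"
  obtains F where "blinfun_apply F = f" and "norm F \<le> 1"
proof -
  have bound: "norm (f z) \<le> norm z * 1" for z
    using le[of z] le[of "- z"] linear_neg[OF f, of z] by simp
  have "bounded_linear f"
    by (rule bounded_linear_intro[OF linear_add[OF f] linear_scale[OF f] bound])
  then have F: "blinfun_apply (Blinfun f) = f" by (rule bounded_linear_Blinfun_apply)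
  moreover have "norm (Blinfun f) \<le> 1"
    by (rule norm_blinfun_bound) (use bound F in simp_all)
  ultimately show ?thesis by (rule that)
qed

section \<open>Norm-one functionals bounded below on a sequence\<close>

definition norm_dominates_cone :: "(nat \<Rightarrow> 'a::real_normed_vector) \<Rightarrow> (nat \<Rightarrow> real) \<Rightarrow> bool" where
  "norm_dominates_cone w b \<longleftrightarrow>
     (\<forall>n \<alpha>. (\<forall>k. 0 \<le> \<alpha> k) \<longrightarrow> (\<Sum>k<n. \<alpha> k * b k) \<le> norm (\<Sum>k<n. \<alpha> k *\<^sub>R w k))"

text \<open>A linear functional is dominated by \<open>cone_gauge w b\<close> exactly when it is dominated by the
  norm and satisfies \<open>f (w k) \<ge> b k\<close> for all \<open>k\<close>.\<close>

definition cone_gauge :: "(nat \<Rightarrow> 'a::real_normed_vector) \<Rightarrow> (nat \<Rightarrow> real) \<Rightarrow> 'a \<Rightarrow> real" where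
  "cone_gauge w b z =
     Inf ((\<lambda>(n, \<alpha>). norm (z + (\<Sum>k<n. \<alpha> k *\<^sub>R w k)) - (\<Sum>k<n. \<alpha> k * b k)) `
       {(n, \<alpha>). \<forall>k. 0 \<le> \<alpha> k \<and> (n \<le> k \<longrightarrow> \<alpha> k = 0)})"

lemma cone_gauge_lower:
  assumes wb: "norm_dominates_cone w b" and \<alpha>: "\<forall>k. 0 \<le> \<alpha> k \<and> (n \<le> k \<longrightarrow> \<alpha> k = 0)"
  shows "cone_gauge w b z \<le> norm (z + (\<Sum>k<n. \<alpha> k *\<^sub>R w k)) - (\<Sum>k<n. \<alpha> k * b k)"
proof -
  have "- norm z \<le> norm (z + (\<Sum>k<n. \<alpha> k *\<^sub>R w k)) - (\<Sum>k<n. \<alpha> k * b k)"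
    if "\<forall>k. 0 \<le> \<alpha> k \<and> (n \<le> k \<longrightarrow> \<alpha> k = 0)" for n \<alpha>
  proof -
    have "(\<Sum>k<n. \<alpha> k * b k) \<le> norm (\<Sum>k<n. \<alpha> k *\<^sub>R w k)"
      using wb that by (simp add: norm_dominates_cone_def)
    also have "\<dots> \<le> norm (z + (\<Sum>k<n. \<alpha> k *\<^sub>R w k)) + norm z"
      using norm_triangle_ineq4[of "z + (\<Sum>k<n. \<alpha> k *\<^sub>R w k)" z] by simp
    finally show ?thesis by simp
  qed
  then show ?thesis
    unfolding cone_gauge_def using \<alpha> by (intro cInf_lower bdd_belowI2) auto
qed

lemma cone_gauge_greatest:
  assumes "\<And>n \<alpha>. \<forall>k. 0 \<le> \<alpha> k \<and> (n \<le> k \<longrightarrow> \<alpha> k = 0) \<Longrightarrow> a \<le> norm (z + (\<Sum>k<n. \<alpha> k *\<^sub>R w k)) - (\<Sum>k<n. \<alpha> k * b k)"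
  shows "a \<le> cone_gauge w b z"
  unfolding cone_gauge_def using assms by (intro cInf_greatest) auto

lemma cone_gauge_le_norm:
  assumes "norm_dominates_cone w b"
  shows "cone_gauge w b z \<le> norm z"
  using cone_gauge_lower[OF assms, where n=0 and \<alpha>="\<lambda>_. 0" and z=z] by simp

lemma cone_gauge_minus_le:
  assumes "norm_dominates_cone w b"
  shows "cone_gauge w b (- w k) \<le> - b k"
proof -
  define \<alpha> where "\<alpha> = (\<lambda>j. if j = k then 1 else (0::real))"
  have "(\<Sum>j<Suc k. \<alpha> j *\<^sub>R w j) = w k" "(\<Sum>j<Suc k. \<alpha> j * b j) = b k"
    by (simp_all add: \<alpha>_def if_distrib sum.delta cong: if_cong)
  then show ?thesis using cone_gauge_lower[OF assms, where n="Suc k" and \<alpha>=\<alpha> and z="- w k"] by (simp add: \<alpha>_def)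
qed

lemma sum_lessThan_eq_if_vanishing:
  "m \<le> (n::nat) \<Longrightarrow> (\<And>k. m \<le> k \<Longrightarrow> g k = 0) \<Longrightarrow> (\<Sum>k<n. g k) = (\<Sum>k<m. g k)"
  by (rule sum.mono_neutral_right) auto

lemma sublinear_cone_gauge:
  assumes wb: "norm_dominates_cone w b"
  shows "sublinear (cone_gauge w b)"
proof (rule sublinearI)
  let ?p = "cone_gauge w b"
  let ?val = "\<lambda>z n \<alpha>. norm (z + (\<Sum>k<n. \<alpha> k *\<^sub>R w k)) - (\<Sum>k<n. \<alpha> k * b k)"
  fix z1 z2
  have "?p (z1 + z2) \<le> ?val z1 n1 \<alpha>1 + ?val z2 n2 \<alpha>2"
    if \<alpha>1: "\<forall>k. 0 \<le> \<alpha>1 k \<and> (n1 \<le> k \<longrightarrow> \<alpha>1 k = 0)"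
      and \<alpha>2: "\<forall>k. 0 \<le> \<alpha>2 k \<and> (n2 \<le> k \<longrightarrow> \<alpha>2 k = 0)" for n1 n2 \<alpha>1 \<alpha>2
  proof -
    define n where "n = max n1 n2"
    have "(\<Sum>k<n. \<alpha>1 k *\<^sub>R w k) = (\<Sum>k<n1. \<alpha>1 k *\<^sub>R w k)"
      "(\<Sum>k<n. \<alpha>1 k * b k) = (\<Sum>k<n1. \<alpha>1 k * b k)"
      "(\<Sum>k<n. \<alpha>2 k *\<^sub>R w k) = (\<Sum>k<n2. \<alpha>2 k *\<^sub>R w k)"
      "(\<Sum>k<n. \<alpha>2 k * b k) = (\<Sum>k<n2. \<alpha>2 k * b k)"
      by (rule sum_lessThan_eq_if_vanishing; simp add: n_def \<alpha>1 \<alpha>2)+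
    then have "(\<Sum>k<n. (\<alpha>1 k + \<alpha>2 k) *\<^sub>R w k) = (\<Sum>k<n1. \<alpha>1 k *\<^sub>R w k) + (\<Sum>k<n2. \<alpha>2 k *\<^sub>R w k)"
      "(\<Sum>k<n. (\<alpha>1 k + \<alpha>2 k) * b k) = (\<Sum>k<n1. \<alpha>1 k * b k) + (\<Sum>k<n2. \<alpha>2 k * b k)"
      by (simp_all add: scaleR_add_left distrib_right sum.distrib)
    moreover have "\<forall>k. 0 \<le> \<alpha>1 k + \<alpha>2 k \<and> (n \<le> k \<longrightarrow> \<alpha>1 k + \<alpha>2 k = 0)"
      using \<alpha>1 \<alpha>2 by (simp add: n_def)
    then have "?p (z1 + z2) \<le> ?val (z1 + z2) n (\<lambda>k. \<alpha>1 k + \<alpha>2 k)"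
      by (rule cone_gauge_lower[OF wb])
    ultimately have "?p (z1 + z2) \<le> norm ((z1 + (\<Sum>k<n1. \<alpha>1 k *\<^sub>R w k)) + (z2 + (\<Sum>k<n2. \<alpha>2 k *\<^sub>R w k)))
        - ((\<Sum>k<n1. \<alpha>1 k * b k) + (\<Sum>k<n2. \<alpha>2 k * b k))"
      by (simp only:) (simp add: add_ac)
    also have "\<dots> \<le> ?val z1 n1 \<alpha>1 + ?val z2 n2 \<alpha>2"
      using norm_triangle_ineq by simp
    finally show ?thesis .
  qed
  then have "?p (z1 + z2) - ?val z2 n2 \<alpha>2 \<le> ?p z1"
    if "\<forall>k. 0 \<le> \<alpha>2 k \<and> (n2 \<le> k \<longrightarrow> \<alpha>2 k = 0)" for n2 \<alpha>2
    using that by (intro cone_gauge_greatest) (simp add: algebra_simps)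
  then have "?p (z1 + z2) - ?p z1 \<le> ?p z2" by (intro cone_gauge_greatest) (simp add: algebra_simps)
  then show "?p (z1 + z2) \<le> ?p z1 + ?p z2" by simp
next
  fix t :: real and z
  assume t: "0 < t"
  have "cone_gauge w b (t *\<^sub>R z) / t \<le> cone_gauge w b z"
  proof (rule cone_gauge_greatest)
    fix n \<alpha> assume \<alpha>: "\<forall>k. 0 \<le> (\<alpha>::nat \<Rightarrow> real) k \<and> (n \<le> k \<longrightarrow> \<alpha> k = 0)"
    have "t *\<^sub>R z + (\<Sum>k<n. (t * \<alpha> k) *\<^sub>R w k) = t *\<^sub>R (z + (\<Sum>k<n. \<alpha> k *\<^sub>R w k))"
      by (simp add: scaleR_add_right scaleR_sum_right)
    moreover have "(\<Sum>k<n. t * \<alpha> k * b k) = t * (\<Sum>k<n. \<alpha> k * b k)"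
      by (simp add: sum_distrib_left mult.assoc)
    moreover have "\<forall>k. 0 \<le> t * \<alpha> k \<and> (n \<le> k \<longrightarrow> t * \<alpha> k = 0)"
      using \<alpha> t by simp
    then have "cone_gauge w b (t *\<^sub>R z)
        \<le> norm (t *\<^sub>R z + (\<Sum>k<n. (t * \<alpha> k) *\<^sub>R w k)) - (\<Sum>k<n. t * \<alpha> k * b k)"
      by (rule cone_gauge_lower[OF wb])
    ultimately have "cone_gauge w b (t *\<^sub>R z)
        \<le> t * (norm (z + (\<Sum>k<n. \<alpha> k *\<^sub>R w k)) - (\<Sum>k<n. \<alpha> k * b k))"
      using t by (simp add: right_diff_distrib)
    then show "cone_gauge w b (t *\<^sub>R z) / t \<le> norm (z + (\<Sum>k<n. \<alpha> k *\<^sub>R w k)) - (\<Sum>k<n. \<alpha> k * b k)"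
      using t by (simp add: pos_divide_le_eq mult.commute)
  qed
  then show "cone_gauge w b (t *\<^sub>R z) \<le> t * cone_gauge w b z"
    using t by (simp add: pos_divide_le_eq mult.commute)
qed

theorem norm_dominates_cone_obtains_functional:
  fixes w :: "nat \<Rightarrow> 'a::real_normed_vector"
  assumes wb: "norm_dominates_cone w b"
  obtains F :: "'a \<Rightarrow>\<^sub>L real" where "norm F \<le> 1" and "\<And>k. b k \<le> blinfun_apply F (w k)"
proof -
  obtain f where f: "linear f" "\<And>z. f z \<le> cone_gauge w b z"
    using sublinear_dominates_linear[OF sublinear_cone_gauge[OF wb]] by blast
  have "f z \<le> norm z" for z
    using f(2)[of z] cone_gauge_le_norm[OF wb, of z] by linarith
  then obtain F where F: "blinfun_apply F = f" "norm F \<le> 1"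
    by (rule linear_le_norm_obtains_blinfun[OF f(1)])
  have fw: "b k \<le> f (w k)" for k
    using f(2)[of "- w k"] cone_gauge_minus_le[OF wb, of k] linear_neg[OF f(1), of "w k"] by simp
  show ?thesis by (rule that[OF F(2)]) (simp add: F(1) fw)
qed

section \<open>Weak-star cluster points in the bidual\<close>

lemma canon_bidual_apply [simp]: "blinfun_apply (canon_bidual x) f = blinfun_apply f x"
proof -
  have "bounded_linear (\<lambda>f::'a \<Rightarrow>\<^sub>L real. blinfun_apply f x)"
    by (rule bounded_bilinear.bounded_linear_left[OF bounded_bilinear_blinfun_apply])
  then show ?thesis by (simp add: canon_bidual_def bounded_linear_Blinfun_apply)
qed

lemma openin_weak_star_evaluation:
  assumes "open V"
  shows "openin weak_star_topology {H. blinfun_apply H f \<in> V}"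
proof -
  have "openin (product_topology (\<lambda>_. euclideanreal) UNIV)
      {\<psi> \<in> topspace (product_topology (\<lambda>_. euclideanreal) UNIV). \<psi> f \<in> V}"
    by (rule openin_continuous_map_preimage[OF continuous_map_product_projection])
       (use assms open_openin in auto)
  then have "openin (product_topology (\<lambda>_. euclideanreal) UNIV) {\<psi>. \<psi> f \<in> V}" by simp
  moreover have "{H. blinfun_apply H f \<in> V} = blinfun_apply -` {\<psi>. \<psi> f \<in> V} \<inter> UNIV" by blast
  ultimately show ?thesis
    unfolding weak_star_topology_def openin_pullback_topology by blast
qed

lemma clust_bidual_apply_ge:
  assumes G: "G \<in> clust_bidual s" and ev: "eventually (\<lambda>n. a \<le> blinfun_apply f (s n)) sequentially"
  shows "a \<le> blinfun_apply G f"
proof (rule ccontr)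
  assume "\<not> a \<le> blinfun_apply G f"
  then have "G \<in> {H. blinfun_apply H f \<in> {..<a}}" by simp
  moreover have "openin weak_star_topology {H. blinfun_apply H f \<in> {..<a}}"
    by (rule openin_weak_star_evaluation) simp
  ultimately have "\<exists>\<^sub>F n in sequentially. canon_bidual (s n) \<in> {H. blinfun_apply H f \<in> {..<a}}"
    using G unfolding clust_bidual_def by blast
  then have "\<exists>\<^sub>F n in sequentially. blinfun_apply f (s n) < a" by simp
  with ev show False by (simp add: frequently_def not_less)
qed

lemma clust_bidual_apply_le:
  assumes G: "G \<in> clust_bidual s" and ev: "eventually (\<lambda>n. blinfun_apply f (s n) \<le> a) sequentially"
  shows "blinfun_apply G f \<le> a"
proof -
  have "eventually (\<lambda>n. - a \<le> blinfun_apply (- f) (s n)) sequentially"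
    using ev by (rule eventually_mono) (simp add: blinfun.minus_left)
  from clust_bidual_apply_ge[OF G this] show ?thesis by (simp add: blinfun.minus_right)
qed

lemma norm_clust_bidual_le:
  assumes G: "G \<in> clust_bidual s" and M: "\<And>n. norm (s n) \<le> M"
  shows "norm G \<le> M"
proof (rule norm_blinfun_bound)
  show "0 \<le> M" using M[of 0] norm_ge_zero order_trans by blast
  fix f
  have abs_bound: "\<bar>blinfun_apply f (s n)\<bar> \<le> M * norm f" for n
    using norm_blinfun[of f "s n"] mult_left_mono[OF M[of n] norm_ge_zero[of f]]
    by (simp add: mult.commute)
  have bound: "- (M * norm f) \<le> blinfun_apply f (s n) \<and> blinfun_apply f (s n) \<le> M * norm f" for n
    using abs_bound[of n] by linarith
  have "blinfun_apply G f \<le> M * norm f"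
    using bound by (intro clust_bidual_apply_le[OF G] always_eventually) simp
  moreover have "- (M * norm f) \<le> blinfun_apply G f"
    using bound by (intro clust_bidual_apply_ge[OF G] always_eventually) simp
  ultimately show "norm (blinfun_apply G f) \<le> M * norm f" by simp
qed

lemma clust_bidual_subseq:
  assumes r: "strict_mono r"
  shows "clust_bidual (s \<circ> r) \<subseteq> clust_bidual s"
proof
  fix G assume G: "G \<in> clust_bidual (s \<circ> r)"
  show "G \<in> clust_bidual s" unfolding clust_bidual_def
  proof (intro CollectI allI impI)
    fix U assume "openin weak_star_topology U \<and> G \<in> U"
    then have "\<forall>N. \<exists>n\<ge>N. canon_bidual (s (r n)) \<in> U"
      using G by (auto simp: clust_bidual_def frequently_sequentially)
    then have "\<exists>n\<ge>N. canon_bidual (s n) \<in> U" for N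
      using seq_suble[OF r] le_trans by metis
    then show "\<exists>\<^sub>F n in sequentially. canon_bidual (s n) \<in> U"
      by (simp add: frequently_sequentially)
  qed
qed

lemma compactin_frequently_cluster:
  assumes K: "compactin T K" and s: "\<And>n. s n \<in> K"
  shows "\<exists>p\<in>K. \<forall>U. openin T U \<and> p \<in> U \<longrightarrow> (\<exists>\<^sub>F n in sequentially. s n \<in> U)"
proof (rule ccontr)
  assume "\<not> ?thesis"
  then have "\<forall>p\<in>K. \<exists>U. openin T U \<and> p \<in> U \<and> eventually (\<lambda>n. s n \<notin> U) sequentially"
    by (auto simp: frequently_def)
  then obtain U where U: "\<And>p. p \<in> K \<Longrightarrow> openin T (U p) \<and> p \<in> U p \<and> eventually (\<lambda>n. s n \<notin> U p) sequentially"
    by metis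
  have "K \<subseteq> \<Union>(U ` K)" and "\<forall>B\<in>U ` K. openin T B" using U by blast+
  then have "\<exists>\<F>. finite \<F> \<and> \<F> \<subseteq> U ` K \<and> K \<subseteq> \<Union>\<F>"
    using K unfolding compactin_def by (elim conjE) (drule spec[of _ "U ` K"], blast)
  then obtain \<F> where \<F>: "finite \<F>" "\<F> \<subseteq> U ` K" "K \<subseteq> \<Union>\<F>" by blast
  then obtain K' where K': "finite K'" "K' \<subseteq> K" "\<F> = U ` K'"
    by (meson finite_subset_image)
  have "eventually (\<lambda>n. \<forall>p\<in>K'. s n \<notin> U p) sequentially"
    using K' U by (intro eventually_ball_finite) auto
  then obtain n where "\<forall>p\<in>K'. s n \<notin> U p" unfolding eventually_sequentially by blast
  with s \<F>(3) K'(3) show False by blast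
qed

text \<open>A weak-star cluster point is obtained in the compact product of the intervals
  \<open>[-M\<parallel>f\<parallel>, M\<parallel>f\<parallel>]\<close> (Tychonoff); it is linear and bounded since linearity relations are closed
  conditions in the product topology.\<close>

lemma clust_bidual_nonempty:
  fixes s :: "nat \<Rightarrow> 'a::real_normed_vector"
  assumes M: "\<And>n. norm (s n) \<le> M"
  shows "clust_bidual s \<noteq> {}"
proof -
  define T where "T = product_topology (\<lambda>_::('a \<Rightarrow>\<^sub>L real). euclideanreal) UNIV"
  define K where "K = PiE UNIV (\<lambda>f::('a \<Rightarrow>\<^sub>L real). cball (0::real) (M * norm f))"
  define \<phi> where "\<phi> = (\<lambda>n (f::'a \<Rightarrow>\<^sub>L real). blinfun_apply f (s n))"
  have "compactin T K" unfolding T_def K_def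
    by (simp add: compactin_PiE compactin_euclidean_iff)
  moreover have "\<phi> n \<in> K" for n
  proof -
    have "\<bar>blinfun_apply f (s n)\<bar> \<le> M * norm f" for f
      using norm_blinfun[of f "s n"] mult_left_mono[OF M[of n] norm_ge_zero[of f]]
      by (simp add: mult.commute)
    then show ?thesis by (simp add: K_def PiE_UNIV_domain \<phi>_def dist_real_def)
  qed
  ultimately obtain \<Phi> where "\<Phi> \<in> K"
    and cluster: "\<And>U. openin T U \<Longrightarrow> \<Phi> \<in> U \<Longrightarrow> \<exists>\<^sub>F n in sequentially. \<phi> n \<in> U"
    by (metis compactin_frequently_cluster)
  have topT: "topspace T = UNIV" by (simp add: T_def)
  have eq_at_cluster: "g \<Phi> = h \<Phi>"
    if "continuous_map T euclideanreal g" "continuous_map T euclideanreal h" "\<And>n. g (\<phi> n) = h (\<phi> n)"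
    for g h
  proof (rule ccontr)
    assume "g \<Phi> \<noteq> h \<Phi>"
    moreover have "openin T (topspace T - {\<psi> \<in> topspace T. g \<psi> = h \<psi>})"
      using closedin_continuous_maps_eq[OF Hausdorff_space_euclidean that(1,2)] by blast
    ultimately have "\<exists>\<^sub>F n in sequentially. g (\<phi> n) \<noteq> h (\<phi> n)"
      using cluster topT by (force elim: frequently_elim1)
    with that(3) show False by simp
  qed
  have proj: "continuous_map T euclideanreal (\<lambda>\<psi>. \<psi> f)" for f
    unfolding T_def by (rule continuous_map_product_projection) simp
  have "bounded_linear \<Phi>"
  proof (rule bounded_linear_intro)
    show "\<Phi> (f + g) = \<Phi> f + \<Phi> g" for f g
      by (rule eq_at_cluster) (auto intro: proj continuous_map_add simp: \<phi>_def blinfun.add_left)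
    show "\<Phi> (r *\<^sub>R f) = r *\<^sub>R \<Phi> f" for r f
      by (rule eq_at_cluster) (auto intro: proj continuous_map_real_mult_left simp: \<phi>_def blinfun.scaleR_left)
    show "norm (\<Phi> f) \<le> norm f * M" for f
    proof -
      have "\<Phi> f \<in> cball 0 (M * norm f)" using \<open>\<Phi> \<in> K\<close> unfolding K_def PiE_UNIV_domain by blast
      then show ?thesis by (simp add: dist_real_def mult.commute)
    qed
  qed
  then have G: "blinfun_apply (Blinfun \<Phi>) = \<Phi>" by (rule bounded_linear_Blinfun_apply)
  have "Blinfun \<Phi> \<in> clust_bidual s" unfolding clust_bidual_def
  proof (intro CollectI allI impI)
    fix U assume U: "openin weak_star_topology U \<and> Blinfun \<Phi> \<in> U"
    then obtain V where V: "openin T V" "U = blinfun_apply -` V \<inter> UNIV"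
      unfolding weak_star_topology_def openin_pullback_topology T_def by blast
    moreover have "blinfun_apply (canon_bidual (s n)) = \<phi> n" for n
      by (auto simp: \<phi>_def)
    ultimately show "\<exists>\<^sub>F n in sequentially. canon_bidual (s n) \<in> U"
      using cluster[OF V(1)] U G by (auto elim!: frequently_elim1)
  qed
  then show ?thesis by blast
qed

lemma apply_diff_le_dist:
  fixes G H :: "('a::real_normed_vector \<Rightarrow>\<^sub>L real) \<Rightarrow>\<^sub>L real"
  assumes "norm F \<le> 1"
  shows "blinfun_apply G F - blinfun_apply H F \<le> dist G H"
proof -
  have "blinfun_apply G F - blinfun_apply H F \<le> norm (G - H) * norm F"
    using norm_blinfun[of "G - H" F] by (simp add: blinfun.diff_left)
  also have "\<dots> \<le> norm (G - H)" using mult_left_mono[OF assms norm_ge_zero[of "G - H"]] by simp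
  finally show ?thesis by (simp add: dist_norm)
qed

section \<open>Sequences with a lower \<open>\<ell>\<^sub>1\<close>-estimate\<close>

definition l1_lower_estimate :: "real \<Rightarrow> (nat \<Rightarrow> 'a::real_normed_vector) \<Rightarrow> bool" where
  "l1_lower_estimate c x \<longleftrightarrow>
     (\<forall>n (\<alpha>::nat \<Rightarrow> real). c * (\<Sum>j=1..n. \<bar>\<alpha> j\<bar>) \<le> norm (\<Sum>j=1..n. \<alpha> j *\<^sub>R x j))"

lemma l1_lower_estimate_shift:
  assumes x: "l1_lower_estimate c x" and N: "1 \<le> N"
  shows "c * (\<Sum>k<m. \<bar>\<gamma> k\<bar>) \<le> norm (\<Sum>k<m. \<gamma> k *\<^sub>R x (N + k))"
proof -
  define \<beta> where "\<beta> = (\<lambda>j. if N \<le> j \<and> j < N + m then \<gamma> (j - N) else 0)"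
  have window: "sum h {1..N + m} = (\<Sum>k<m. h (N + k))"
    if "\<And>j. \<not> (N \<le> j \<and> j < N + m) \<Longrightarrow> h j = 0" for h :: "nat \<Rightarrow> 'b::comm_monoid_add"
  proof -
    have "sum h {1..N + m} = sum h {N..<N + m}"
      by (rule sum.mono_neutral_right) (use N that in auto)
    also have "\<dots> = (\<Sum>k<m. h (N + k))"
      using sum.shift_bounds_nat_ivl[of h 0 N m] by (simp add: add.commute atLeast0LessThan)
    finally show ?thesis .
  qed
  have "c * (\<Sum>j=1..N + m. \<bar>\<beta> j\<bar>) \<le> norm (\<Sum>j=1..N + m. \<beta> j *\<^sub>R x j)"
    using x by (simp add: l1_lower_estimate_def)
  moreover have "(\<Sum>j=1..N + m. \<beta> j *\<^sub>R x j) = (\<Sum>k<m. \<gamma> k *\<^sub>R x (N + k))"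
    "(\<Sum>j=1..N + m. \<bar>\<beta> j\<bar>) = (\<Sum>k<m. \<bar>\<gamma> k\<bar>)"
    by (subst window; auto simp: \<beta>_def)+
  ultimately show ?thesis by simp
qed

lemma sum_lessThan_add:
  fixes m1 m2 :: nat
  shows "(\<Sum>k<m1 + m2. g k) = (\<Sum>k<m1. g k) + (\<Sum>k<m2. g (m1 + k))"
  by (induction m2) (simp_all add: algebra_simps)

lemma l1_lower_estimate_tail_far:
  assumes x: "l1_lower_estimate c x" and e: "0 < e"
  shows "\<exists>N\<ge>1. \<forall>m \<gamma>. (\<forall>k. 0 \<le> \<gamma> k) \<longrightarrow>
           c * (\<Sum>k<m. \<gamma> k) - e \<le> norm ((\<Sum>k<m. \<gamma> k *\<^sub>R x (N + k)) - y)"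
proof (rule ccontr)
  assume "\<not> ?thesis"
  then have close: "\<exists>m \<gamma>. (\<forall>k. 0 \<le> \<gamma> k) \<and>
      norm ((\<Sum>k<m. \<gamma> k *\<^sub>R x (N + k)) - y) < c * (\<Sum>k<m. \<gamma> k) - e" if "1 \<le> N" for N
    using that by (auto simp: not_le dest: spec[of _ N])
  obtain m1 \<gamma>1 where \<gamma>1: "\<forall>k. 0 \<le> \<gamma>1 k"
    and close1: "norm ((\<Sum>k<m1. \<gamma>1 k *\<^sub>R x (1 + k)) - y) < c * (\<Sum>k<m1. \<gamma>1 k) - e"
    using close[of 1] by auto
  obtain m2 \<gamma>2 where \<gamma>2: "\<forall>k. 0 \<le> \<gamma>2 k"
    and close2: "norm ((\<Sum>k<m2. \<gamma>2 k *\<^sub>R x (1 + m1 + k)) - y) < c * (\<Sum>k<m2. \<gamma>2 k) - e"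
    using close[of "1 + m1"] by auto
  define v1 where "v1 = (\<Sum>k<m1. \<gamma>1 k *\<^sub>R x (1 + k))"
  define v2 where "v2 = (\<Sum>k<m2. \<gamma>2 k *\<^sub>R x (1 + m1 + k))"
  define \<delta> where "\<delta> = (\<lambda>k. if k < m1 then \<gamma>1 k else - \<gamma>2 (k - m1))"
  have "(\<Sum>k<m1 + m2. \<delta> k *\<^sub>R x (1 + k)) = v1 - v2"
    unfolding sum_lessThan_add v1_def v2_def by (simp add: \<delta>_def sum_negf add.assoc)
  moreover have "(\<Sum>k<m1 + m2. \<bar>\<delta> k\<bar>) = (\<Sum>k<m1. \<gamma>1 k) + (\<Sum>k<m2. \<gamma>2 k)"
    unfolding sum_lessThan_add using \<gamma>1 \<gamma>2 by (simp add: \<delta>_def)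
  ultimately have "c * ((\<Sum>k<m1. \<gamma>1 k) + (\<Sum>k<m2. \<gamma>2 k)) \<le> norm (v1 - v2)"
    using l1_lower_estimate_shift[OF x, of 1 \<delta> "m1 + m2"] by simp
  also have "\<dots> \<le> norm (v1 - y) + norm (v2 - y)"
    using norm_triangle_ineq4[of "v1 - y" "v2 - y"] by simp
  also have "\<dots> < c * (\<Sum>k<m1. \<gamma>1 k) - e + (c * (\<Sum>k<m2. \<gamma>2 k) - e)"
    using close1 close2 unfolding v1_def v2_def by simp
  finally show False using e by (simp add: distrib_left)
qed

lemma l1_lower_estimate_tail_cone_far:
  assumes x: "l1_lower_estimate c x" and e: "0 < e"
  obtains N where "1 \<le> N" and "\<And>m \<gamma> t. \<forall>k. 0 \<le> \<gamma> k \<Longrightarrow> 0 \<le> t \<Longrightarrow>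
    c * (\<Sum>k<m. \<gamma> k) - t * e \<le> norm ((\<Sum>k<m. \<gamma> k *\<^sub>R x (N + k)) - t *\<^sub>R y)"
proof -
  obtain N where N: "1 \<le> N" and far: "\<And>m \<gamma>. \<forall>k. 0 \<le> \<gamma> k \<Longrightarrow>
      c * (\<Sum>k<m. \<gamma> k) - e \<le> norm ((\<Sum>k<m. \<gamma> k *\<^sub>R x (N + k)) - y)"
    using l1_lower_estimate_tail_far[OF x e, of y] by blast
  have "c * (\<Sum>k<m. \<gamma> k) - t * e \<le> norm ((\<Sum>k<m. \<gamma> k *\<^sub>R x (N + k)) - t *\<^sub>R y)"
    if \<gamma>: "\<forall>k. 0 \<le> \<gamma> k" and t: "0 \<le> t" for m \<gamma> t
  proof (cases "t = 0")
    case True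
    then show ?thesis using l1_lower_estimate_shift[OF x N, of \<gamma> m] \<gamma> by simp
  next
    case False
    with t have t: "0 < t" by simp
    have "t * (c * (\<Sum>k<m. \<gamma> k / t) - e) \<le> t * norm ((\<Sum>k<m. (\<gamma> k / t) *\<^sub>R x (N + k)) - y)"
      using far[of "\<lambda>k. \<gamma> k / t" m] \<gamma> t by (simp add: mult_left_mono)
    moreover have "t * norm ((\<Sum>k<m. (\<gamma> k / t) *\<^sub>R x (N + k)) - y)
        = norm ((\<Sum>k<m. \<gamma> k *\<^sub>R x (N + k)) - t *\<^sub>R y)"
    proof -
      have "t *\<^sub>R ((\<Sum>k<m. (\<gamma> k / t) *\<^sub>R x (N + k)) - y) = (\<Sum>k<m. \<gamma> k *\<^sub>R x (N + k)) - t *\<^sub>R y"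
        using t by (simp add: scaleR_diff_right scaleR_sum_right)
      then have "norm (t *\<^sub>R ((\<Sum>k<m. (\<gamma> k / t) *\<^sub>R x (N + k)) - y))
          = norm ((\<Sum>k<m. \<gamma> k *\<^sub>R x (N + k)) - t *\<^sub>R y)" by (rule arg_cong)
      then show ?thesis using t by simp
    qed
    moreover have "t * (c * (\<Sum>k<m. \<gamma> k / t) - e) = c * (\<Sum>k<m. \<gamma> k) - t * e"
    proof -
      have "(\<Sum>k<m. \<gamma> k / t) = (\<Sum>k<m. \<gamma> k) / t" by (simp add: sum_divide_distrib)
      then show ?thesis using t by (simp add: field_simps)
    qed
    ultimately show ?thesis by simp
  qed
  with N show ?thesis by (rule that)
qed

lemma l1_lower_estimate_obtains_alternating_functional:
  assumes x: "l1_lower_estimate c x"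
  obtains F :: "'a::real_normed_vector \<Rightarrow>\<^sub>L real"
  where "norm F \<le> 1" and "\<And>k. c \<le> blinfun_apply F (x (2 * k + 2))"
    and "\<And>k. blinfun_apply F (x (2 * k + 1)) \<le> - c"
proof -
  define w where "w = (\<lambda>k. ((-1::real) ^ Suc k) *\<^sub>R x (1 + k))"
  have "norm_dominates_cone w (\<lambda>_. c)" unfolding norm_dominates_cone_def
  proof (intro allI impI)
    fix n \<alpha> assume \<alpha>: "\<forall>k. 0 \<le> (\<alpha>::nat \<Rightarrow> real) k"
    have "c * (\<Sum>k<n. \<bar>\<alpha> k * (-1) ^ Suc k\<bar>) \<le> norm (\<Sum>k<n. (\<alpha> k * (-1) ^ Suc k) *\<^sub>R x (1 + k))"
      by (rule l1_lower_estimate_shift[OF x]) simp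
    then show "(\<Sum>k<n. \<alpha> k * c) \<le> norm (\<Sum>k<n. \<alpha> k *\<^sub>R w k)"
      using \<alpha> by (simp add: w_def abs_mult sum_distrib_left mult.commute)
  qed
  then obtain F :: "'a \<Rightarrow>\<^sub>L real" where F: "norm F \<le> 1" "\<And>k. c \<le> blinfun_apply F (w k)"
    using norm_dominates_cone_obtains_functional by blast
  have "c \<le> blinfun_apply F (x (2 * k + 2))" "blinfun_apply F (x (2 * k + 1)) \<le> - c" for k
    using F(2)[of "2 * k + 1"] F(2)[of "2 * k"]
    by (simp_all add: w_def blinfun.scaleR_right blinfun.minus_right)
  with F(1) show ?thesis by (rule that)
qed

lemma l1_lower_estimate_obtains_tail_functional:
  assumes x: "l1_lower_estimate c x" and e: "0 < e"
  obtains F :: "'a::real_normed_vector \<Rightarrow>\<^sub>L real" and N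
  where "norm F \<le> 1" and "blinfun_apply F y \<le> e" and "\<And>n. N \<le> n \<Longrightarrow> c \<le> blinfun_apply F (x n)"
proof -
  obtain N where far: "\<And>m \<gamma> t. \<forall>k. 0 \<le> \<gamma> k \<Longrightarrow> 0 \<le> t \<Longrightarrow>
      c * (\<Sum>k<m. \<gamma> k) - t * e \<le> norm ((\<Sum>k<m. \<gamma> k *\<^sub>R x (N + k)) - t *\<^sub>R y)"
    using l1_lower_estimate_tail_cone_far[OF x e] by blast
  define w where "w = (\<lambda>k. case k of 0 \<Rightarrow> - y | Suc j \<Rightarrow> x (N + j))"
  define b where "b = (\<lambda>k. case k of 0 \<Rightarrow> - e | Suc j \<Rightarrow> c)"
  have "norm_dominates_cone w b" unfolding norm_dominates_cone_def
  proof (intro allI impI)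
    fix n \<alpha> assume \<alpha>: "\<forall>k. 0 \<le> (\<alpha>::nat \<Rightarrow> real) k"
    show "(\<Sum>k<n. \<alpha> k * b k) \<le> norm (\<Sum>k<n. \<alpha> k *\<^sub>R w k)"
    proof (cases n)
      case (Suc m)
      have "c * (\<Sum>k<m. \<alpha> (Suc k)) - \<alpha> 0 * e
          \<le> norm ((\<Sum>k<m. \<alpha> (Suc k) *\<^sub>R x (N + k)) - \<alpha> 0 *\<^sub>R y)"
        using far[of "\<lambda>k. \<alpha> (Suc k)" "\<alpha> 0" m] \<alpha> by simp
      then show ?thesis unfolding Suc sum.lessThan_Suc_shift
        by (simp add: w_def b_def sum_distrib_left mult.commute)
    qed simp
  qed
  then obtain F :: "'a \<Rightarrow>\<^sub>L real" where F: "norm F \<le> 1" "\<And>k. b k \<le> blinfun_apply F (w k)"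
    using norm_dominates_cone_obtains_functional by blast
  have "blinfun_apply F y \<le> e" using F(2)[of 0] by (simp add: w_def b_def blinfun.minus_right)
  moreover have "c \<le> blinfun_apply F (x n)" if "N \<le> n" for n
    using F(2)[of "Suc (n - N)"] that by (simp add: w_def b_def)
  ultimately show ?thesis using F(1) that by blast
qed

lemma delta_X_ge_twice:
  fixes x :: "nat \<Rightarrow> 'a::real_normed_vector"
  assumes M: "\<And>n. norm (x n) \<le> M" and x: "l1_lower_estimate c x"
  shows "2 * c \<le> delta_X x"
proof -
  obtain F where F: "norm F \<le> 1" "\<And>k. c \<le> blinfun_apply F (x (2 * k + 2))"
    "\<And>k. blinfun_apply F (x (2 * k + 1)) \<le> - c"
    using l1_lower_estimate_obtains_alternating_functional[OF x] by blast
  have mono: "strict_mono (\<lambda>k::nat. 2 * k + 2)" "strict_mono (\<lambda>k::nat. 2 * k + 1)"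
    by (simp_all add: strict_mono_def)
  obtain G1 where G1: "G1 \<in> clust_bidual (x \<circ> (\<lambda>k. 2 * k + 2))"
    using clust_bidual_nonempty[of "x \<circ> (\<lambda>k. 2 * k + 2)" M] M by auto
  obtain G2 where G2: "G2 \<in> clust_bidual (x \<circ> (\<lambda>k. 2 * k + 1))"
    using clust_bidual_nonempty[of "x \<circ> (\<lambda>k. 2 * k + 1)" M] M by auto
  have "c \<le> blinfun_apply G1 F"
    by (rule clust_bidual_apply_ge[OF G1]) (use F(2) in \<open>auto intro: always_eventually\<close>)
  moreover have "blinfun_apply G2 F \<le> - c"
    by (rule clust_bidual_apply_le[OF G2]) (use F(3) in \<open>auto intro: always_eventually\<close>)
  ultimately have "2 * c \<le> blinfun_apply G1 F - blinfun_apply G2 F" by simp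
  also have "\<dots> \<le> dist G1 G2" by (rule apply_diff_le_dist[OF F(1)])
  also have "\<dots> \<le> diameter (clust_bidual x)"
  proof (rule diameter_bounded_bound)
    show "bounded (clust_bidual x)"
      unfolding bounded_iff using norm_clust_bidual_le[of _ x M] M by blast
    show "G1 \<in> clust_bidual x" "G2 \<in> clust_bidual x"
      using G1 G2 clust_bidual_subseq[OF mono(1)] clust_bidual_subseq[OF mono(2)] by blast+
  qed
  finally show ?thesis by (simp add: delta_X_def)
qed

lemma dist_clust_bidual_canon_ge:
  assumes x: "l1_lower_estimate c x" and G: "G \<in> clust_bidual x"
  shows "c \<le> dist G (canon_bidual y)"
proof (rule field_le_epsilon)
  fix e :: real assume e: "0 < e"
  obtain F N where F: "norm F \<le> 1" "blinfun_apply F y \<le> e"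
    "\<And>n. N \<le> n \<Longrightarrow> c \<le> blinfun_apply F (x n)"
    using l1_lower_estimate_obtains_tail_functional[OF x e, where y=y] by blast
  have "c \<le> blinfun_apply G F"
    using F(3) by (intro clust_bidual_apply_ge[OF G]) (auto simp: eventually_sequentially)
  then have "c - e \<le> blinfun_apply G F - blinfun_apply (canon_bidual y) F" using F(2) by simp
  also have "\<dots> \<le> dist G (canon_bidual y)" by (rule apply_diff_le_dist[OF F(1)])
  finally show "c \<le> dist G (canon_bidual y) + e" by simp
qed

theorem lemma2p1:
  fixes x :: "nat \<Rightarrow> 'a::banach" and c :: real
  assumes bdd: "bounded (range x)"
    and c_pos: "c > 0"
    and l1: "\<And>n (\<alpha>::nat \<Rightarrow> real). norm (\<Sum>j=1..n. \<alpha> j *\<^sub>R x j) \<ge> c * (\<Sum>j=1..n. \<bar>\<alpha> j\<bar>)"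
  shows "delta_X x \<ge> 2 * c \<and> setdist (clust_bidual x) (range canon_bidual) \<ge> c"
proof
  obtain M where M: "\<And>n. norm (x n) \<le> M" using bdd unfolding bounded_iff by blast
  have x: "l1_lower_estimate c x" using l1 by (simp add: l1_lower_estimate_def)
  show "delta_X x \<ge> 2 * c" by (rule delta_X_ge_twice[OF M x])
  show "setdist (clust_bidual x) (range canon_bidual) \<ge> c"
    using clust_bidual_nonempty[OF M] dist_clust_bidual_canon_ge[OF x]
    by (intro le_setdistI) auto
qed

end
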